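(* Let $n\ge 5$ be odd and let $G$ be the graph obtained from the cycle $C_n$ by adding one edge between two non-adjacent vertices of the cycle. Then $G$ is strongly EFX-orientable.
   Context: All graphs are finite and simple. For a graph $G=(V,E)$ and $v\in V$, $E(v)$ is the set of edges incident to $v$. A graphical instance on $G$ assigns to each vertex $v$ a valuation $f_v:2^E\to\mathbb{R}_{\ge 0}$ that is monotone ($A\subseteq B\Rightarrow f_v(A)\le f_v(B)$) and satisfies $f_v(X)=f_v(X\cap E(v))$ for all $X\subseteq E$. An orientation of $G$ chooses for each edge one of its endpoints as its head; vertex $v$ receives the bundle $X_v$ of edges whose head is $v$. The orientation is EFX if for all $u,v\in V$ and every $g\in X_v$, $f_u(X_u)\ge f_u(X_v\setminus\{g\})$. A graph $G$ is strongly EFX-orientable if for every graphical instance on $G$ there exists an EFX orientation. *)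

theory Defs
  imports Complex_Main
begin

definition incident :: "'v set set \<Rightarrow> 'v \<Rightarrow> 'v set set" where
  "incident E v = {e\<in>E. v \<in> e}"

definition graphical_instance ::
  "'v set \<Rightarrow> 'v set set \<Rightarrow> ('v \<Rightarrow> 'v set set \<Rightarrow> real) \<Rightarrow> bool" where
  "graphical_instance V E f \<longleftrightarrow>
     (\<forall>v\<in>V. (\<forall>X. X \<subseteq> E \<longrightarrow> f v X \<ge> 0)
          \<and> (\<forall>A B. A \<subseteq> B \<and> B \<subseteq> E \<longrightarrow> f v A \<le> f v B)
          \<and> (\<forall>X. X \<subseteq> E \<longrightarrow> f v X = f v (X \<inter> incident E v)))"

definition orientation :: "'v set set \<Rightarrow> ('v set \<Rightarrow> 'v) \<Rightarrow> bool" where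
  "orientation E h \<longleftrightarrow> (\<forall>e\<in>E. h e \<in> e)"

definition bundle_of :: "'v set set \<Rightarrow> ('v set \<Rightarrow> 'v) \<Rightarrow> 'v \<Rightarrow> 'v set set" where
  "bundle_of E h v = {e\<in>E. h e = v}"

definition EFX_orientation ::
  "'v set \<Rightarrow> 'v set set \<Rightarrow> ('v \<Rightarrow> 'v set set \<Rightarrow> real) \<Rightarrow> ('v set \<Rightarrow> 'v) \<Rightarrow> bool" where
  "EFX_orientation V E f h \<longleftrightarrow> orientation E h \<and>
     (\<forall>u\<in>V. \<forall>v\<in>V. \<forall>g\<in>bundle_of E h v.
        f u (bundle_of E h u) \<ge> f u (bundle_of E h v - {g}))"

definition strongly_EFX_orientable :: "'v set \<Rightarrow> 'v set set \<Rightarrow> bool" where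
  "strongly_EFX_orientable V E \<longleftrightarrow>
     (\<forall>f. graphical_instance V E f \<longrightarrow> (\<exists>h. EFX_orientation V E f h))"

definition cycle_edges :: "nat \<Rightarrow> nat set set" where
  "cycle_edges n = {{i, (i + 1) mod n} | i. i < n}"

end

theory Submission
  imports Defs
begin

text \<open>
  Cut the cycle at the chord end a into a path, orient every path edge towards a chosen vertex t
  and the chord towards a. Then t is the only vertex receiving two edges, and since a valuation
  only sees the edges at its own vertex and the graph is simple, the orientation is EFX as soon as
  the two neighbours that lost an edge to t value what they keep at least as much. Away from the
  chord this only asks which of its two cycle edges each neighbour of t prefers: t works if its
  predecessor prefers its predecessor edge and its successor its successor edge (t is a valley).
  Without valleys these preferences propagate in steps of two along the two arcs between a and b,
  and a case analysis on the preferences of the four cycle neighbours of a and b and on how a and b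
  value the chord, choosing t at or next to a chord end, finishes the proof. It needs an arc of odd
  length from one chord end to the other, which exists because n is odd.
\<close>

section \<open>EFX orientations of simple graphs\<close>

definition EFX_orientable :: "'v set \<Rightarrow> 'v set set \<Rightarrow> ('v \<Rightarrow> 'v set set \<Rightarrow> real) \<Rightarrow> bool" where
  "EFX_orientable V E f \<longleftrightarrow> (\<exists>h. EFX_orientation V E f h)"

lemma bundle_inter_incident_subset:
  assumes doubletons: "\<And>e. e \<in> E \<Longrightarrow> \<exists>x y. x \<noteq> y \<and> e = {x, y}"
    and "orientation E h" and "u \<noteq> v"
  shows "bundle_of E h v \<inter> incident E u \<subseteq> {{u, v}}"
proof
  fix e assume e: "e \<in> bundle_of E h v \<inter> incident E u"
  then have "e \<in> E" "v \<in> e" "u \<in> e"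
    using \<open>orientation E h\<close> by (auto simp: bundle_of_def incident_def orientation_def)
  with doubletons[of e] \<open>u \<noteq> v\<close> show "e \<in> {{u, v}}" by auto
qed

lemma EFX_orientation_if_shared_heads_unenvied:
  assumes gi: "graphical_instance V E f"
    and doubletons: "\<And>e. e \<in> E \<Longrightarrow> \<exists>x y. x \<noteq> y \<and> e = {x, y}"
    and ori: "orientation E h"
    and unenvied: "\<And>e g u. e \<in> E \<Longrightarrow> g \<in> E \<Longrightarrow> g \<noteq> e \<Longrightarrow> h g = h e \<Longrightarrow> u \<in> e \<Longrightarrow> u \<noteq> h e
                     \<Longrightarrow> \<exists>e'\<in>E. h e' = u \<and> f u {e} \<le> f u {e'}"
  shows "EFX_orientation V E f h"
  unfolding EFX_orientation_def
proof (intro conjI ballI ori)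
  fix u v g
  assume u: "u \<in> V" and "v \<in> V" and g: "g \<in> bundle_of E h v"
  have mono: "\<And>A B. A \<subseteq> B \<Longrightarrow> B \<subseteq> E \<Longrightarrow> f u A \<le> f u B"
    and local: "\<And>X. X \<subseteq> E \<Longrightarrow> f u X = f u (X \<inter> incident E u)"
    using gi u unfolding graphical_instance_def by blast+
  have bundle_sub: "\<And>w. bundle_of E h w \<subseteq> E" by (auto simp: bundle_of_def)
  show "f u (bundle_of E h v - {g}) \<le> f u (bundle_of E h u)"
  proof (cases "u = v")
    case True
    then show ?thesis by (intro mono bundle_sub) auto
  next
    case False
    define Y where "Y = (bundle_of E h v - {g}) \<inter> incident E u"
    have value_Y: "f u (bundle_of E h v - {g}) = f u Y"
      unfolding Y_def using bundle_sub by (intro local) blast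
    have "Y \<subseteq> {{u, v}}"
      using bundle_inter_incident_subset[OF doubletons ori False] unfolding Y_def by blast
    then consider "Y = {}" | "Y = {{u, v}}" by blast
    then show ?thesis
    proof cases
      case 1
      then show ?thesis using value_Y mono[OF _ bundle_sub] by simp
    next
      case 2
      then have "{u, v} \<in> E" "h {u, v} = v" "{u, v} \<noteq> g"
        unfolding Y_def bundle_of_def by auto
      moreover have "g \<in> E" "h g = v" using g by (auto simp: bundle_of_def)
      ultimately obtain e' where "e' \<in> E" "h e' = u" "f u {{u, v}} \<le> f u {e'}"
        using unenvied[of "{u, v}" g u] False by auto
      moreover have "f u {e'} \<le> f u (bundle_of E h u)"
        using \<open>e' \<in> E\<close> \<open>h e' = u\<close> by (intro mono bundle_sub) (auto simp: bundle_of_def)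
      ultimately show ?thesis using value_Y 2 by simp
    qed
  qed
qed

definition cycle_succ :: "nat \<Rightarrow> nat \<Rightarrow> nat" where
  "cycle_succ n v = (v + 1) mod n"

definition cycle_pred :: "nat \<Rightarrow> nat \<Rightarrow> nat" where
  "cycle_pred n v = (v + n - 1) mod n"

definition cycle_edge :: "nat \<Rightarrow> nat \<Rightarrow> nat set" where
  "cycle_edge n v = {v, cycle_succ n v}"

lemma cycle_succ_less: "0 < n \<Longrightarrow> cycle_succ n v < n"
  by (simp add: cycle_succ_def)

lemma cycle_pred_less: "0 < n \<Longrightarrow> cycle_pred n v < n"
  by (simp add: cycle_pred_def)

lemma cycle_succ_pred: "v < n \<Longrightarrow> cycle_succ n (cycle_pred n v) = v"
  by (simp add: cycle_succ_def cycle_pred_def mod_Suc_eq)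

lemma cycle_pred_succ:
  assumes "v < n" shows "cycle_pred n (cycle_succ n v) = v"
proof -
  have "(v + 1) mod n + n - 1 = (v + 1) mod n + (n - 1)" using assms by simp
  then have "cycle_pred n (cycle_succ n v) = (v + 1 + (n - 1)) mod n"
    by (simp add: cycle_succ_def cycle_pred_def mod_add_left_eq)
  also have "v + 1 + (n - 1) = v + n" using assms by simp
  finally show ?thesis using assms by simp
qed

lemma cycle_succ_neq: "2 \<le> n \<Longrightarrow> v < n \<Longrightarrow> cycle_succ n v \<noteq> v"
  by (cases "v + 1 = n") (auto simp: cycle_succ_def)

lemma cycle_pred_neq: "2 \<le> n \<Longrightarrow> v < n \<Longrightarrow> cycle_pred n v \<noteq> v"
  using cycle_succ_neq[of n v] cycle_succ_pred[of v n] by fastforce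

lemma cycle_succ_succ_neq:
  assumes "3 \<le> n" "v < n" shows "cycle_succ n (cycle_succ n v) \<noteq> v"
proof -
  have "cycle_succ n (cycle_succ n v) = (v + 2) mod n"
    by (simp add: cycle_succ_def mod_Suc_eq)
  moreover have "(v + 2) mod n \<noteq> v"
  proof (cases "v + 2 < n")
    case False
    then have "(v + 2) mod n = v + 2 - n" using assms by (simp add: mod_if)
    then show ?thesis using assms False by arith
  qed simp
  ultimately show ?thesis by simp
qed

lemma cycle_edges_eq_image: "cycle_edges n = cycle_edge n ` {..<n}"
  unfolding cycle_edges_def cycle_edge_def cycle_succ_def by auto

lemma cycle_edge_inj:
  "3 \<le> n \<Longrightarrow> v < n \<Longrightarrow> w < n \<Longrightarrow> cycle_edge n v = cycle_edge n w \<Longrightarrow> v = w"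
  unfolding cycle_edge_def doubleton_eq_iff using cycle_succ_succ_neq by force

lemma parity_propagation:
  fixes R :: "nat \<Rightarrow> bool"
  assumes step: "\<And>j. i < j \<Longrightarrow> j < k \<Longrightarrow> R (j - 1) \<Longrightarrow> R (j + 1)"
    and "R i" "i \<le> k" "even (k - i)"
  shows "R k"
proof -
  have "R (i + 2 * m)" if "i + 2 * m \<le> k" for m
    using that
  proof (induction m)
    case (Suc m)
    then show ?case using step[of "i + 2 * m + 1"] by simp
  qed (use \<open>R i\<close> in simp)
  moreover obtain m where "k = i + 2 * m"
    using \<open>i \<le> k\<close> \<open>even (k - i)\<close> by (metis evenE le_add_diff_inverse)
  ultimately show ?thesis by simp
qed

definition prefers_succ_edge :: "nat \<Rightarrow> (nat \<Rightarrow> nat set set \<Rightarrow> real) \<Rightarrow> nat \<Rightarrow> bool" where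
  "prefers_succ_edge n f v \<longleftrightarrow> f v {cycle_edge n (cycle_pred n v)} \<le> f v {cycle_edge n v}"

lemma not_prefers_succ_edge:
  "\<not> prefers_succ_edge n f v \<Longrightarrow> f v {cycle_edge n v} \<le> f v {cycle_edge n (cycle_pred n v)}"
  by (simp add: prefers_succ_edge_def)

locale chorded_cycle_instance =
  fixes n a b :: nat and f :: "nat \<Rightarrow> nat set set \<Rightarrow> real"
  assumes three_le_n: "3 \<le> n" and a_less: "a < n" and b_less: "b < n" and a_neq_b: "a \<noteq> b"
    and chord_not_cycle_edge: "{a, b} \<notin> cycle_edges n"
    and graphical: "graphical_instance {0..<n} (cycle_edges n \<union> {{a, b}}) f"
begin

abbreviation "E \<equiv> cycle_edges n \<union> {{a, b}}"
abbreviation "P \<equiv> prefers_succ_edge n f"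

lemma two_le_n: "2 \<le> n" and n_pos: "0 < n"
  using three_le_n by simp_all

lemma cycle_edge_neq_chord: "v < n \<Longrightarrow> cycle_edge n v \<noteq> {a, b}"
  using chord_not_cycle_edge unfolding cycle_edges_eq_image by auto

lemma cycle_succ_a_neq_b: "cycle_succ n a \<noteq> b"
  using cycle_edge_neq_chord[OF a_less] by (auto simp: cycle_edge_def)

lemma cycle_succ_b_neq_a: "cycle_succ n b \<noteq> a"
  using cycle_edge_neq_chord[OF b_less] by (auto simp: cycle_edge_def)

lemma cycle_pred_a_neq_b: "cycle_pred n a \<noteq> b"
  using cycle_succ_b_neq_a cycle_succ_pred[OF a_less] by auto

lemma chord_swap: "{b, a} = {a, b}"
  by (rule insert_commute)

lemma edge_doubleton: "e \<in> E \<Longrightarrow> \<exists>x y. x \<noteq> y \<and> e = {x, y}"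
  using a_neq_b cycle_succ_neq[of n] three_le_n
  unfolding cycle_edges_eq_image cycle_edge_def by fastforce

definition offset :: "nat \<Rightarrow> nat" where
  "offset v = (v + n - a) mod n"

definition vertex_at :: "nat \<Rightarrow> nat" where
  "vertex_at j = (a + j) mod n"

lemma offset_less: "offset v < n"
  using n_pos by (simp add: offset_def)

lemma vertex_at_less: "vertex_at j < n"
  using n_pos by (simp add: vertex_at_def)

lemma offset_eq: "v < n \<Longrightarrow> offset v = (if a \<le> v then v - a else v + n - a)"
  using a_less by (auto simp: offset_def mod_if)

lemma vertex_at_offset: "v < n \<Longrightarrow> vertex_at (offset v) = v"
  using a_less by (auto simp: vertex_at_def offset_eq)

lemma offset_vertex_at: "offset (vertex_at j) = j mod n"
proof -
  have "(a + j) mod n + n - a = (a + j) mod n + (n - a)"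
    using a_less by simp
  then have "offset (vertex_at j) = ((a + j) mod n + (n - a)) mod n"
    by (simp add: offset_def vertex_at_def)
  also have "\<dots> = (a + j + (n - a)) mod n"
    by (simp add: mod_add_left_eq)
  also have "a + j + (n - a) = j + n"
    using a_less by simp
  finally show ?thesis by simp
qed

lemma vertex_at_eq_iff: "vertex_at i = vertex_at j \<longleftrightarrow> i mod n = j mod n"
  by (metis offset_vertex_at mod_add_right_eq vertex_at_def)

lemma vertex_at_zero: "vertex_at 0 = a" and vertex_at_n: "vertex_at n = a"
  using a_less by (simp_all add: vertex_at_def)

lemma cycle_succ_vertex_at: "cycle_succ n (vertex_at j) = vertex_at (j + 1)"
  by (simp add: cycle_succ_def vertex_at_def mod_Suc_eq)

lemma cycle_pred_vertex_at: "0 < j \<Longrightarrow> cycle_pred n (vertex_at j) = vertex_at (j - 1)"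
  by (metis Suc_diff_1 Suc_eq_plus1 cycle_pred_succ cycle_succ_vertex_at vertex_at_less)

lemma offset_eq_zero_iff: "v < n \<Longrightarrow> offset v = 0 \<longleftrightarrow> v = a"
  by (metis offset_vertex_at vertex_at_offset vertex_at_zero mod_0)

lemma offset_cycle_succ:
  assumes "v < n" "cycle_succ n v \<noteq> a"
  shows "offset (cycle_succ n v) = offset v + 1"
proof -
  have "cycle_succ n v = vertex_at (offset v + 1)"
    using assms(1) by (metis cycle_succ_vertex_at vertex_at_offset)
  moreover have "offset v + 1 \<noteq> n"
    using assms(2) calculation vertex_at_n by auto
  ultimately show ?thesis
    using offset_less[of v] by (simp add: offset_vertex_at)
qed

lemma offset_cycle_pred:
  assumes "v < n" "v \<noteq> a"
  shows "offset (cycle_pred n v) = offset v - 1"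
  using assms offset_less[of v] offset_eq_zero_iff[of v]
  by (metis cycle_pred_vertex_at offset_vertex_at vertex_at_offset less_imp_diff_less mod_less
        bot_nat_0.not_eq_extremum)

lemma offset_b_bounds: "2 \<le> offset b" "offset b + 2 \<le> n"
proof -
  have "offset b \<noteq> 0" using offset_eq_zero_iff b_less a_neq_b by simp
  moreover have "offset b \<noteq> 1"
    using cycle_succ_a_neq_b vertex_at_offset[OF b_less] cycle_succ_vertex_at[of 0]
    by (metis vertex_at_zero add_0)
  ultimately show "2 \<le> offset b" by linarith
  have "offset b \<noteq> n - 1"
    using cycle_succ_b_neq_a vertex_at_offset[OF b_less] cycle_succ_vertex_at[of "offset b"]
    by (metis n_pos Suc_diff_1 Suc_eq_plus1 vertex_at_n)
  then show "offset b + 2 \<le> n" using offset_less[of b] \<open>offset b \<noteq> 1\<close> by linarith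
qed

end

sublocale chorded_cycle_instance \<subseteq> swapped: chorded_cycle_instance n b a f
  using three_le_n a_less b_less a_neq_b chord_not_cycle_edge graphical
  by unfold_locales (simp_all add: insert_commute)

context chorded_cycle_instance
begin

lemma offsets_of_chord_ends: "offset b + swapped.offset a = n"
  using offset_eq[OF b_less] swapped.offset_eq[OF a_less] a_less b_less a_neq_b by auto

lemma vertex_at_one: "vertex_at 1 = cycle_succ n a"
  using cycle_succ_vertex_at[of 0] vertex_at_zero by simp

lemma vertex_at_n_minus_one: "vertex_at (n - 1) = cycle_pred n a"
  using cycle_pred_vertex_at[of n] vertex_at_n n_pos by simp

lemma vertex_at_offset_b: "vertex_at (offset b) = b"
  and vertex_at_offset_b_minus_one: "vertex_at (offset b - 1) = cycle_pred n b"
  and vertex_at_offset_b_plus_one: "vertex_at (offset b + 1) = cycle_succ n b"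
  using vertex_at_offset[OF b_less] cycle_pred_vertex_at[of "offset b"] cycle_succ_vertex_at[of "offset b"]
    offset_b_bounds by auto

lemma vertex_at_notin_chord: "0 < x \<Longrightarrow> x < n \<Longrightarrow> x \<noteq> offset b \<Longrightarrow> vertex_at x \<notin> {a, b}"
  using vertex_at_eq_iff[of x 0] vertex_at_eq_iff[of x "offset b"] offset_less[of b]
  by (auto simp: vertex_at_zero vertex_at_offset_b)

section \<open>Orientations with a single sink\<close>

text \<open>
  The heads are the vertices at offsets
  j + 1 for j < r and j for j \<ge> r, and two of these agree modulo n only at r.
\<close>

definition head :: "nat \<Rightarrow> nat set \<Rightarrow> nat" where
  "head r e = (if e = {a, b} then a else
     let v = THE v. v < n \<and> e = cycle_edge n v in if offset v < r then cycle_succ n v else v)"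

lemma head_chord: "head r {a, b} = a"
  by (simp add: head_def)

lemma head_cycle_edge:
  assumes "v < n" shows "head r (cycle_edge n v) = (if offset v < r then cycle_succ n v else v)"
proof -
  have "(THE w. w < n \<and> cycle_edge n v = cycle_edge n w) = v"
    using assms cycle_edge_inj[OF three_le_n] by (intro the_equality) auto
  then show ?thesis using cycle_edge_neq_chord[OF assms] by (simp add: head_def)
qed

lemma orientation_head: "orientation E (head r)"
  unfolding orientation_def cycle_edges_eq_image
  by (auto simp: head_chord head_cycle_edge) (simp_all add: cycle_edge_def)

lemma head_as_vertex_at:
  assumes "e \<in> E"
  obtains "e = {a, b}" "head r e = vertex_at 0"
  | j where "j < n" "e = cycle_edge n (vertex_at j)"
      "head r e = vertex_at (if j < r then j + 1 else j)"
proof (cases "e = {a, b}")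
  case True
  then show ?thesis using that(1) by (simp add: head_chord vertex_at_zero)
next
  case False
  then obtain v where v: "v < n" "e = cycle_edge n v" using assms cycle_edges_eq_image by auto
  moreover have "cycle_succ n v = vertex_at (offset v + 1)"
    using v by (metis cycle_succ_vertex_at vertex_at_offset)
  ultimately show ?thesis
    using that(2)[of "offset v"] offset_less[of v] by (simp add: head_cycle_edge vertex_at_offset)
qed

lemma head_collision:
  assumes "r \<le> n" "e \<in> E" "g \<in> E" "g \<noteq> e" "head r g = head r e"
  shows "head r e = vertex_at r"
proof -
  have small_mod: "x mod n = (if x = n then 0 else x)" if "x \<le> n" for x
    using that by (simp add: mod_if)
  from assms(2) show ?thesis
  proof (cases rule: head_as_vertex_at[where r = r])
    case 1
    from assms(3) show ?thesis
    proof (cases rule: head_as_vertex_at[where r = r])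
      case (2 j)
      then show ?thesis using 1 assms vertex_at_eq_iff small_mod[of r] small_mod[of "j + 1"]
        by (auto split: if_splits)
    qed (use 1 assms in simp)
  next
    case (2 i)
    from assms(3) show ?thesis
    proof (cases rule: head_as_vertex_at[where r = r])
      case 1
      then show ?thesis using 2 assms vertex_at_eq_iff small_mod[of r] small_mod[of "i + 1"]
        by (auto split: if_splits)
    next
      case (2 j)
      with \<open>e = cycle_edge n (vertex_at i)\<close> assms(4) have "i \<noteq> j" by auto
      then show ?thesis using 2 \<open>i < n\<close> \<open>head r e = _\<close> assms vertex_at_eq_iff
          small_mod[of "i + 1"] small_mod[of "j + 1"]
        by (auto split: if_splits)
    qed
  qed
qed

lemma EFX_orientable_if_sink_unenvied:
  assumes "r \<le> n"
    and unenvied: "\<And>e u. e \<in> E \<Longrightarrow> head r e = vertex_at r \<Longrightarrow> u \<in> e \<Longrightarrow> u \<noteq> vertex_at r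
                    \<Longrightarrow> \<exists>e'\<in>E. head r e' = u \<and> f u {e} \<le> f u {e'}"
  shows "EFX_orientable {0..<n} E f"
  unfolding EFX_orientable_def
proof (rule exI, rule EFX_orientation_if_shared_heads_unenvied[OF graphical edge_doubleton orientation_head[of r]])
  fix e g u
  assume "e \<in> E" "g \<in> E" "g \<noteq> e" "head r g = head r e" "u \<in> e" "u \<noteq> head r e"
  then show "\<exists>e'\<in>E. head r e' = u \<and> f u {e} \<le> f u {e'}"
    using head_collision[OF \<open>r \<le> n\<close>] unenvied by metis
qed

lemma head_cycle_edge_pred:
  assumes "v < n" "v \<noteq> a" "offset v \<le> r"
  shows "head r (cycle_edge n (cycle_pred n v)) = v"
proof -
  have "offset (cycle_pred n v) < r"
    using assms offset_cycle_pred offset_eq_zero_iff[of v] by simp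
  then show ?thesis using assms by (simp add: head_cycle_edge cycle_pred_less n_pos cycle_succ_pred)
qed

lemma head_cycle_edge_self: "v < n \<Longrightarrow> r \<le> offset v \<Longrightarrow> head r (cycle_edge n v) = v"
  by (simp add: head_cycle_edge)

lemma cycle_edge_mem_E: "v < n \<Longrightarrow> cycle_edge n v \<in> E"
  by (simp add: cycle_edges_eq_image)

lemma sink_pred_unenvied:
  assumes t: "t < n" "t \<noteq> a"
    and at_a: "cycle_pred n t = a \<Longrightarrow> f a {cycle_edge n a} \<le> f a {{a, b}}"
    and not_at_a: "cycle_pred n t \<noteq> a \<Longrightarrow> \<not> P (cycle_pred n t)"
  shows "\<exists>e'\<in>E. head (offset t) e' = cycle_pred n t
           \<and> f (cycle_pred n t) {cycle_edge n (cycle_pred n t)} \<le> f (cycle_pred n t) {e'}"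
proof (cases "cycle_pred n t = a")
  case True
  then show ?thesis using at_a by (intro bexI[of _ "{a, b}"]) (auto simp: head_chord)
next
  case False
  let ?w = "cycle_pred n (cycle_pred n t)"
  have "offset (cycle_pred n t) \<le> offset t" using offset_cycle_pred t by simp
  then have "head (offset t) (cycle_edge n ?w) = cycle_pred n t"
    using False t head_cycle_edge_pred cycle_pred_less by simp
  moreover have "f (cycle_pred n t) {cycle_edge n (cycle_pred n t)} \<le> f (cycle_pred n t) {cycle_edge n ?w}"
    using not_at_a False not_prefers_succ_edge by simp
  moreover have "cycle_edge n ?w \<in> E" by (intro cycle_edge_mem_E cycle_pred_less n_pos)
  ultimately show ?thesis by blast
qed

lemma sink_succ_unenvied:
  assumes t: "t < n"
    and at_a: "cycle_succ n t = a \<Longrightarrow> f a {cycle_edge n t} \<le> f a {{a, b}}"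
    and not_at_a: "cycle_succ n t \<noteq> a \<Longrightarrow> P (cycle_succ n t)"
  shows "\<exists>e'\<in>E. head (offset t) e' = cycle_succ n t
           \<and> f (cycle_succ n t) {cycle_edge n t} \<le> f (cycle_succ n t) {e'}"
proof (cases "cycle_succ n t = a")
  case True
  then show ?thesis using at_a by (intro bexI[of _ "{a, b}"]) (auto simp: head_chord)
next
  case False
  let ?u = "cycle_succ n t"
  have "?u < n" using cycle_succ_less n_pos by blast
  moreover have "offset t \<le> offset ?u" using False offset_cycle_succ t by simp
  ultimately have "head (offset t) (cycle_edge n ?u) = ?u" by (simp add: head_cycle_edge_self)
  moreover have "f ?u {cycle_edge n t} \<le> f ?u {cycle_edge n ?u}"
    using not_at_a False t by (simp add: prefers_succ_edge_def cycle_pred_succ)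
  moreover have "cycle_edge n ?u \<in> E" by (intro cycle_edge_mem_E cycle_succ_less n_pos)
  ultimately show ?thesis by blast
qed

lemma EFX_orientable_sink_at:
  assumes t: "t < n" "t \<noteq> a"
    and left_at_a: "cycle_pred n t = a \<Longrightarrow> f a {cycle_edge n a} \<le> f a {{a, b}}"
    and left: "cycle_pred n t \<noteq> a \<Longrightarrow> \<not> P (cycle_pred n t)"
    and right_at_a: "cycle_succ n t = a \<Longrightarrow> f a {cycle_edge n t} \<le> f a {{a, b}}"
    and right: "cycle_succ n t \<noteq> a \<Longrightarrow> P (cycle_succ n t)"
  shows "EFX_orientable {0..<n} E f"
proof (rule EFX_orientable_if_sink_unenvied[of "offset t"])
  show "offset t \<le> n" using offset_less[of t] by simp
  fix e u
  assume e: "e \<in> E" "head (offset t) e = vertex_at (offset t)"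
    and u: "u \<in> e" "u \<noteq> vertex_at (offset t)"
  then have head_e: "head (offset t) e = t" and "u \<noteq> t" using vertex_at_offset t by auto
  then have "e \<noteq> {a, b}" using head_chord t by auto
  then obtain v where v: "v < n" "e = cycle_edge n v" using e cycle_edges_eq_image by auto
  show "\<exists>e'\<in>E. head (offset t) e' = u \<and> f u {e} \<le> f u {e'}"
  proof (cases "offset v < offset t")
    case True
    then have "cycle_succ n v = t" using head_e v by (simp add: head_cycle_edge)
    then have "v = cycle_pred n t" "u = v"
      using u \<open>u \<noteq> t\<close> v by (auto simp: cycle_pred_succ cycle_edge_def)
    then show ?thesis using sink_pred_unenvied[OF t left_at_a left] v by simp
  next
    case False
    with head_e v have "v = t" by (simp add: head_cycle_edge)
    with u \<open>u \<noteq> t\<close> v have "u = cycle_succ n t" by (auto simp: cycle_edge_def)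
    with \<open>v = t\<close> show ?thesis using sink_succ_unenvied[OF t(1) right_at_a right] v by simp
  qed
qed

lemma EFX_orientable_all_backward:
  assumes "P (cycle_succ n a)" "f b {{a, b}} \<le> f b {cycle_edge n b}"
  shows "EFX_orientable {0..<n} E f"
proof (rule EFX_orientable_if_sink_unenvied[of 0])
  fix e u
  assume e: "e \<in> E" "head 0 e = vertex_at 0" and u: "u \<in> e" "u \<noteq> vertex_at 0"
  show "\<exists>e'\<in>E. head 0 e' = u \<and> f u {e} \<le> f u {e'}"
  proof (cases "e = {a, b}")
    case True
    then have "u = b" using u vertex_at_zero by auto
    then have "head 0 (cycle_edge n b) = u \<and> f u {e} \<le> f u {cycle_edge n b}"
      using True assms(2) head_cycle_edge_self[OF b_less] by simp
    then show ?thesis using cycle_edge_mem_E[OF b_less] by blast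
  next
    case False
    then obtain v where v: "v < n" "e = cycle_edge n v" using e cycle_edges_eq_image by auto
    then have "v = a" using e vertex_at_zero by (simp add: head_cycle_edge)
    then have "u = cycle_succ n a" using u v vertex_at_zero by (auto simp: cycle_edge_def)
    moreover have "cycle_succ n a < n" using cycle_succ_less n_pos by blast
    ultimately have "head 0 (cycle_edge n u) = u \<and> f u {e} \<le> f u {cycle_edge n u}"
      using assms(1) v \<open>v = a\<close> head_cycle_edge_self a_less
      by (simp add: prefers_succ_edge_def cycle_pred_succ)
    then show ?thesis using cycle_edge_mem_E \<open>u = cycle_succ n a\<close> \<open>cycle_succ n a < n\<close> by blast
  qed
qed (simp)

lemma EFX_orientable_all_forward:
  assumes "\<not> P (cycle_pred n a)" "f b {{a, b}} \<le> f b {cycle_edge n (cycle_pred n b)}"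
  shows "EFX_orientable {0..<n} E f"
proof (rule EFX_orientable_if_sink_unenvied[of n])
  fix e u
  assume e: "e \<in> E" "head n e = vertex_at n" and u: "u \<in> e" "u \<noteq> vertex_at n"
  show "\<exists>e'\<in>E. head n e' = u \<and> f u {e} \<le> f u {e'}"
  proof (cases "e = {a, b}")
    case True
    then have "u = b" using u vertex_at_n by auto
    moreover have "head n (cycle_edge n (cycle_pred n b)) = b"
      using head_cycle_edge_pred b_less a_neq_b offset_less less_imp_le by metis
    ultimately have "head n (cycle_edge n (cycle_pred n b)) = u
        \<and> f u {e} \<le> f u {cycle_edge n (cycle_pred n b)}"
      using True assms(2) by simp
    then show ?thesis using cycle_edge_mem_E cycle_pred_less n_pos by blast
  next
    case False
    then obtain v where v: "v < n" "e = cycle_edge n v" using e cycle_edges_eq_image by auto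
    then have "cycle_succ n v = a" using e vertex_at_n offset_less by (simp add: head_cycle_edge)
    then have "v = cycle_pred n a" "u = v"
      using u v vertex_at_n by (auto simp: cycle_edge_def cycle_pred_succ)
    moreover have "head n (cycle_edge n (cycle_pred n (cycle_pred n a))) = cycle_pred n a"
      using head_cycle_edge_pred cycle_pred_less n_pos cycle_pred_neq[OF two_le_n a_less] offset_less less_imp_le
      by metis
    ultimately have "head n (cycle_edge n (cycle_pred n u)) = u
        \<and> f u {e} \<le> f u {cycle_edge n (cycle_pred n u)}"
      using assms(1) v not_prefers_succ_edge by simp
    then show ?thesis using cycle_edge_mem_E cycle_pred_less n_pos by blast
  qed
qed (simp)

section \<open>Valleys and parity\<close>

text \<open>
  A valley is a vertex t with \<open>\<not> P (cycle_pred n t)\<close> and \<open>P (cycle_succ n t)\<close>, a sink as in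
  \<open>EFX_orientable_sink_at\<close>. Vertices next to the chord are excluded so that the notion is
  symmetric in a and b.
\<close>

definition valley_free :: bool where
  "valley_free \<longleftrightarrow> (\<forall>t<n. cycle_pred n t \<notin> {a, b} \<longrightarrow> t \<notin> {a, b} \<longrightarrow> cycle_succ n t \<notin> {a, b}
     \<longrightarrow> \<not> P (cycle_pred n t) \<longrightarrow> \<not> P (cycle_succ n t))"

end

context chorded_cycle_instance
begin

lemma swapped_valley_free: "swapped.valley_free = valley_free"
  by (simp add: valley_free_def swapped.valley_free_def chord_swap)

lemma EFX_orientable_unless_valley_free:
  assumes "\<not> valley_free" shows "EFX_orientable {0..<n} E f"
proof -
  obtain t where "t < n" "cycle_pred n t \<notin> {a, b}" "t \<notin> {a, b}" "cycle_succ n t \<notin> {a, b}"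
    "\<not> P (cycle_pred n t)" "P (cycle_succ n t)"
    using assms unfolding valley_free_def by blast
  then show ?thesis by (intro EFX_orientable_sink_at) auto
qed

lemma not_prefers_succ_edge_propagates:
  assumes valley_free "0 < i" "i \<le> k" "k < n" "k < offset b \<or> offset b < i" "even (k - i)"
    and "\<not> P (vertex_at i)"
  shows "\<not> P (vertex_at k)"
proof (rule parity_propagation[where R = "\<lambda>j. \<not> P (vertex_at j)"])
  fix j assume j: "i < j" "j < k" and "\<not> P (vertex_at (j - 1))"
  have "vertex_at x \<notin> {a, b}" if "i \<le> x" "x \<le> k" for x
    by (rule vertex_at_notin_chord) (use that assms(2-5) in auto)
  then have "vertex_at (j - 1) \<notin> {a, b}" "vertex_at j \<notin> {a, b}" "vertex_at (j + 1) \<notin> {a, b}"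
    using j by simp_all
  moreover have "cycle_pred n (vertex_at j) = vertex_at (j - 1)"
    using j by (intro cycle_pred_vertex_at) simp
  moreover note \<open>\<not> P (vertex_at (j - 1))\<close> \<open>valley_free\<close>[unfolded valley_free_def]
  ultimately show "\<not> P (vertex_at (j + 1))"
    using vertex_at_less[of j] by (metis cycle_succ_vertex_at)
qed (use assms in auto)

lemma EFX_orientable_if_a_prefers_chord:
  assumes valley_free "odd (offset b)" "P (cycle_pred n b)"
    and "f a {cycle_edge n a} \<le> f a {{a, b}}"
  shows "EFX_orientable {0..<n} E f"
proof -
  have "3 \<le> offset b" using assms(2) offset_b_bounds by presburger
  have "P (vertex_at 2)"
  proof (rule ccontr)
    assume "\<not> P (vertex_at 2)"
    then have "\<not> P (vertex_at (offset b - 1))"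
      using not_prefers_succ_edge_propagates[OF \<open>valley_free\<close>, of 2 "offset b - 1"]
        \<open>3 \<le> offset b\<close> assms(2) offset_b_bounds by fastforce
    then show False using assms(3) vertex_at_offset_b_minus_one by simp
  qed
  show ?thesis
  proof (rule EFX_orientable_sink_at[of "vertex_at 1"])
    have "vertex_at 1 \<notin> {a, b}" "vertex_at 2 \<notin> {a, b}"
      using vertex_at_notin_chord \<open>3 \<le> offset b\<close> offset_b_bounds by auto
    then show "vertex_at 1 \<noteq> a" "cycle_succ n (vertex_at 1) \<noteq> a \<Longrightarrow> P (cycle_succ n (vertex_at 1))"
      "cycle_succ n (vertex_at 1) = a \<Longrightarrow> f a {cycle_edge n (vertex_at 1)} \<le> f a {{a, b}}"
      using \<open>P (vertex_at 2)\<close> cycle_succ_vertex_at[of 1] by (auto simp: numeral_2_eq_2)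
  qed (use assms(4) vertex_at_less cycle_pred_vertex_at[of 1] vertex_at_zero in auto)
qed

lemma EFX_orientable_if_b_prefers_chord:
  assumes valley_free "odd (offset b)" "\<not> P (cycle_succ n a)"
    and "f b {cycle_edge n (cycle_pred n b)} \<le> f b {{a, b}}"
  shows "EFX_orientable {0..<n} E f"
proof -
  have "3 \<le> offset b" using assms(2) offset_b_bounds by presburger
  have "\<not> P (vertex_at (offset b - 2))"
    using not_prefers_succ_edge_propagates[OF \<open>valley_free\<close>, of 1 "offset b - 2"]
      \<open>3 \<le> offset b\<close> assms(2,3) offset_b_bounds vertex_at_one by fastforce
  moreover have "cycle_pred n (cycle_pred n b) = vertex_at (offset b - 2)"
    using cycle_pred_vertex_at[of "offset b - 1"] \<open>3 \<le> offset b\<close>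
    by (simp add: vertex_at_offset_b_minus_one[symmetric] numeral_2_eq_2)
  moreover have "vertex_at (offset b - 2) \<noteq> b"
    using vertex_at_notin_chord \<open>3 \<le> offset b\<close> offset_b_bounds by auto
  ultimately show ?thesis
    using swapped.EFX_orientable_sink_at[of "cycle_pred n b", unfolded chord_swap] assms(4)
      cycle_pred_less[OF n_pos] cycle_pred_neq[OF two_le_n b_less] cycle_succ_pred[OF b_less] by auto
qed

lemma odd_offset_b_if_preference_flips:
  assumes valley_free "\<not> P (cycle_succ n a)" "P (cycle_pred n b)"
  shows "odd (offset b)"
proof (rule ccontr)
  assume "\<not> odd (offset b)"
  then have "\<not> P (vertex_at (offset b - 1))"
    using not_prefers_succ_edge_propagates[OF \<open>valley_free\<close>, of 1 "offset b - 1"]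
      assms(2) offset_b_bounds vertex_at_one by fastforce
  then show False using assms(3) vertex_at_offset_b_minus_one by simp
qed

lemma EFX_orientable_if_preference_flips_along_arc:
  assumes valley_free "odd n" "\<not> P (cycle_succ n a)" "P (cycle_pred n b)"
  shows "EFX_orientable {0..<n} E f"
proof -
  have "odd (offset b)" using odd_offset_b_if_preference_flips assms(1,3,4) .
  show ?thesis
  proof (cases "f a {cycle_edge n a} \<le> f a {{a, b}}")
    case True
    then show ?thesis using EFX_orientable_if_a_prefers_chord assms \<open>odd (offset b)\<close> by blast
  next
    case a_prefers_cycle_edge: False
    show ?thesis
    proof (cases "f b {cycle_edge n (cycle_pred n b)} \<le> f b {{a, b}}")
      case True
      then show ?thesis using EFX_orientable_if_b_prefers_chord assms \<open>odd (offset b)\<close> by blast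
    next
      case b_prefers_cycle_edge: False
      consider "\<not> P (cycle_pred n a)" | "P (cycle_succ n b)" | "P (cycle_pred n a)" "\<not> P (cycle_succ n b)"
        by blast
      then show ?thesis
      proof cases
        case 1
        then show ?thesis using EFX_orientable_all_forward b_prefers_cycle_edge by simp
      next
        case 2
        then show ?thesis
          using swapped.EFX_orientable_all_backward[unfolded chord_swap] a_prefers_cycle_edge by simp
      next
        case 3
        have "even (n - 1 - (offset b + 1))"
          using \<open>odd n\<close> \<open>odd (offset b)\<close> offset_b_bounds by presburger
        then have "\<not> P (vertex_at (n - 1))"
          using not_prefers_succ_edge_propagates[OF \<open>valley_free\<close>, of "offset b + 1" "n - 1"]
            3 offset_b_bounds vertex_at_offset_b_plus_one by fastforce
        then show ?thesis using 3 vertex_at_n_minus_one by simp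
      qed
    qed
  qed
qed

lemma EFX_orientable_if_prefers_succ_edges_at_odd_offset:
  assumes valley_free "odd (offset b)"
    and "P (cycle_succ n a)" "P (cycle_succ n b)" "P (cycle_pred n b)"
  shows "EFX_orientable {0..<n} E f"
proof -
  consider "f b {{a, b}} \<le> f b {cycle_edge n b}" | "f a {{a, b}} \<le> f a {cycle_edge n a}"
    | "f a {cycle_edge n a} \<le> f a {{a, b}}"
    by linarith
  then show ?thesis
  proof cases
    case 1
    then show ?thesis using EFX_orientable_all_backward assms(3) by blast
  next
    case 2
    then show ?thesis using swapped.EFX_orientable_all_backward[unfolded chord_swap] assms(4) by blast
  next
    case 3
    then show ?thesis using EFX_orientable_if_a_prefers_chord assms(1,2,5) by blast
  qed
qed

lemma EFX_orientable_if_prefers_pred_edges_at_odd_offset: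
  assumes valley_free "odd (offset b)"
    and "\<not> P (cycle_pred n a)" "\<not> P (cycle_succ n a)"
  shows "EFX_orientable {0..<n} E f"
proof (cases "f b {{a, b}} \<le> f b {cycle_edge n (cycle_pred n b)}")
  case True
  then show ?thesis using EFX_orientable_all_forward assms(3) by blast
next
  case False
  then show ?thesis using EFX_orientable_if_b_prefers_chord assms(1,2,4) by simp
qed

end

context chorded_cycle_instance
begin

lemma odd_offset_of_a_chord_end:
  "odd n \<Longrightarrow> odd (offset b) \<or> odd (swapped.offset a)"
  using offsets_of_chord_ends by presburger

lemma EFX_orientable_if_all_prefer_succ_edges:
  assumes valley_free "odd n"
    and "P (cycle_succ n a)" "P (cycle_pred n a)" "P (cycle_succ n b)" "P (cycle_pred n b)"
  shows "EFX_orientable {0..<n} E f"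
  using odd_offset_of_a_chord_end[OF \<open>odd n\<close>] assms
    EFX_orientable_if_prefers_succ_edges_at_odd_offset
    swapped.EFX_orientable_if_prefers_succ_edges_at_odd_offset[unfolded chord_swap swapped_valley_free]
  by blast

lemma EFX_orientable_if_all_prefer_pred_edges:
  assumes valley_free "odd n"
    and "\<not> P (cycle_succ n a)" "\<not> P (cycle_pred n a)" "\<not> P (cycle_succ n b)" "\<not> P (cycle_pred n b)"
  shows "EFX_orientable {0..<n} E f"
  using odd_offset_of_a_chord_end[OF \<open>odd n\<close>] assms
    EFX_orientable_if_prefers_pred_edges_at_odd_offset
    swapped.EFX_orientable_if_prefers_pred_edges_at_odd_offset[unfolded chord_swap swapped_valley_free]
  by blast

theorem EFX_orientable_if_odd:
  assumes "odd n" shows "EFX_orientable {0..<n} E f"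
proof (cases valley_free)
  case False
  then show ?thesis by (rule EFX_orientable_unless_valley_free)
next
  case True
  let ?succ_a = "P (cycle_succ n a)" and ?pred_a = "P (cycle_pred n a)"
    and ?succ_b = "P (cycle_succ n b)" and ?pred_b = "P (cycle_pred n b)"
  consider "\<not> ?pred_a \<and> ?succ_a" | "\<not> ?pred_b \<and> ?succ_b" | "\<not> ?succ_a \<and> ?pred_b" | "\<not> ?succ_b \<and> ?pred_a"
    | "?succ_a \<and> ?pred_a \<and> ?succ_b \<and> ?pred_b" | "\<not> ?succ_a \<and> \<not> ?pred_a \<and> \<not> ?succ_b \<and> \<not> ?pred_b"
    by blast
  then show ?thesis
  proof cases
    case 1
    then show ?thesis
      using swapped.EFX_orientable_sink_at[OF a_less a_neq_b, unfolded chord_swap]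
        cycle_pred_a_neq_b cycle_succ_a_neq_b by blast
  next
    case 2
    then show ?thesis
      using EFX_orientable_sink_at[OF b_less a_neq_b[symmetric]]
        swapped.cycle_pred_a_neq_b swapped.cycle_succ_a_neq_b by blast
  next
    case 3
    then show ?thesis using EFX_orientable_if_preference_flips_along_arc True \<open>odd n\<close> by blast
  next
    case 4
    then show ?thesis
      using swapped.EFX_orientable_if_preference_flips_along_arc[unfolded chord_swap swapped_valley_free]
        True \<open>odd n\<close> by blast
  qed (use EFX_orientable_if_all_prefer_succ_edges EFX_orientable_if_all_prefer_pred_edges True \<open>odd n\<close>
    in blast)+
qed

end

theorem mainTheorem8:
  fixes n a b :: nat
  assumes "n \<ge> 5" and "odd n"
    and "a < n" and "b < n" and "a \<noteq> b"
    and "{a, b} \<notin> cycle_edges n"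
  shows "strongly_EFX_orientable {0..<n} (cycle_edges n \<union> {{a, b}})"
  unfolding strongly_EFX_orientable_def
proof (intro allI impI)
  fix f assume "graphical_instance {0..<n} (cycle_edges n \<union> {{a, b}}) f"
  then interpret chorded_cycle_instance n a b f
    using assms by unfold_locales auto
  show "\<exists>h. EFX_orientation {0..<n} (cycle_edges n \<union> {{a, b}}) f h"
    using EFX_orientable_if_odd[OF \<open>odd n\<close>] unfolding EFX_orientable_def .
qed

end
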